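(* Let $n\in\mathbb N$, $W=\{w_1,\dots,w_n\}$, $M=\{m_1,\dots,m_n\}$ disjoint, and let $\mu_{\mathrm{id}}$ be the perfect marriage marrying $w_i$ to $m_i$ for every $i$. Let $D=\{(i,j)\in\{1,\dots,n\}^2: i\ne j\}$. There exist functions $\succ_W:\{0,1\}^{D}\to\mathcal F(W,M)$ and $\succ_M:\{0,1\}^{D}\to\mathcal F(M,W)$ such that for all $\bar x=(x^i_j)_{(i,j)\in D}$ and $\bar y=(y^i_j)_{(i,j)\in D}$ in $\{0,1\}^D$, the following are equivalent: (1) $\mu_{\mathrm{id}}$ is stable with respect to $\succ_W(\bar x)$ and $\succ_M(\bar y)$; (2) $\mathrm{DISJ}(\bar x,\bar y)=1$.
   Context: $\mathcal F(W,M)$ is the set of profiles assigning each woman a total order on $M$; $\mathcal F(M,W)$ analogously for men. A pair $(w,m)$ is blocking for a perfect marriage $\mu$ if $w$ prefers $m$ to her spouse in $\mu$ and $m$ prefers $w$ to his spouse in $\mu$; $\mu$ is stable if it has no blocking pair. $\mathrm{DISJ}(\bar x,\bar y)=1$ if there is no index $(i,j)$ with $x^i_j=y^i_j=1$, and $0$ otherwise. *)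

theory Defs
  imports Main
begin

text \<open>Women w_1..w_n and men m_1..m_n are encoded by indices 0..n-1
  (woman i and man i are different objects, living in separate roles).
  A preference relation R of one agent is a linear order (reflexive, in the
  sense of linear_order_on) on the index set of the other side;
  (a,b) in R means a is ranked at least as high as b.\<close>

definition agents :: "nat \<Rightarrow> nat set" where
  "agents n = {..<n}"

definition strictly_prefers :: "(nat \<times> nat) set \<Rightarrow> nat \<Rightarrow> nat \<Rightarrow> bool" where
  "strictly_prefers R a b \<longleftrightarrow> (a, b) \<in> R \<and> a \<noteq> b"

text \<open>A profile in F(W,M) (resp. F(M,W)): each agent of one side gets a total
  order on the other side.\<close>
definition profile :: "nat \<Rightarrow> (nat \<Rightarrow> (nat \<times> nat) set) \<Rightarrow> bool" where
  "profile n P \<longleftrightarrow> (\<forall>i\<in>agents n. linear_order_on (agents n) (P i))"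

definition perfect_marriage :: "nat \<Rightarrow> (nat \<Rightarrow> nat) \<Rightarrow> bool" where
  "perfect_marriage n mu \<longleftrightarrow> bij_betw mu (agents n) (agents n)"

definition blocking_pair ::
  "nat \<Rightarrow> (nat \<Rightarrow> nat) \<Rightarrow> (nat \<Rightarrow> (nat \<times> nat) set) \<Rightarrow> (nat \<Rightarrow> (nat \<times> nat) set)
     \<Rightarrow> nat \<Rightarrow> nat \<Rightarrow> bool" where
  "blocking_pair n mu PW PM w m \<longleftrightarrow>
     w \<in> agents n \<and> m \<in> agents n \<and>
     strictly_prefers (PW w) m (mu w) \<and>
     strictly_prefers (PM m) w (inv_into (agents n) mu m)"

definition stable ::
  "nat \<Rightarrow> (nat \<Rightarrow> nat) \<Rightarrow> (nat \<Rightarrow> (nat \<times> nat) set) \<Rightarrow> (nat \<Rightarrow> (nat \<times> nat) set) \<Rightarrow> bool" where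
  "stable n mu PW PM \<longleftrightarrow> \<not> (\<exists>w m. blocking_pair n mu PW PM w m)"

definition mu_id :: "nat \<Rightarrow> nat" where
  "mu_id = id"

definition D :: "nat \<Rightarrow> (nat \<times> nat) set" where
  "D n = {(i, j). i < n \<and> j < n \<and> i \<noteq> j}"

text \<open>{0,1}^D, as boolean functions that are False outside D (extensional).\<close>
definition bitvecs :: "nat \<Rightarrow> (nat \<times> nat \<Rightarrow> bool) set" where
  "bitvecs n = {x. \<forall>p. p \<notin> D n \<longrightarrow> \<not> x p}"

definition DISJ :: "nat \<Rightarrow> (nat \<times> nat \<Rightarrow> bool) \<Rightarrow> (nat \<times> nat \<Rightarrow> bool) \<Rightarrow> bool" where
  "DISJ n x y \<longleftrightarrow> \<not> (\<exists>p\<in>D n. x p \<and> y p)"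

end

theory Submission
  imports Defs
begin

text \<open>Woman i ranks first the men j with x(i,j), then her husband, then everyone
  else; man j likewise ranks first the women i with y(i,j), then his wife. Then
  (i,j) blocks the identity marriage exactly when i \<noteq> j and x(i,j) = y(i,j) = 1,
  so the identity marriage is stable iff x and y are disjoint.\<close>

definition key_order :: "'a set \<Rightarrow> ('a \<Rightarrow> nat) \<Rightarrow> ('a \<times> 'a) set" where
  "key_order A f = {(a, b). a \<in> A \<and> b \<in> A \<and> f a \<le> f b}"

lemma linear_order_on_key_order:
  assumes "inj_on f A"
  shows "linear_order_on A (key_order A f)"
  using assms unfolding key_order_def linear_order_on_def partial_order_on_def preorder_on_def
    refl_on_def trans_def antisym_def total_on_def inj_on_def
  by (auto intro: order_antisym)

lemma strictly_prefers_key_order: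
  "strictly_prefers (key_order A f) a b \<longleftrightarrow> a \<in> A \<and> b \<in> A \<and> f a \<le> f b \<and> a \<noteq> b"
  unfolding strictly_prefers_def key_order_def by auto

text \<open>Tier 0 holds the agents satisfying first, tier 1 the spouse s, tier 2 the
  rest; adding the index a breaks ties within a tier.\<close>
definition tier_key :: "nat \<Rightarrow> (nat \<Rightarrow> bool) \<Rightarrow> nat \<Rightarrow> nat \<Rightarrow> nat" where
  "tier_key n first s a = (if a = s then 1 else if first a then 0 else 2) * n + a"

lemma inj_on_tier_key: "inj_on (tier_key n first s) (agents n)"
proof (rule inj_onI)
  fix a b
  assume a: "a \<in> agents n" and b: "b \<in> agents n"
    and eq: "tier_key n first s a = tier_key n first s b"
  have "tier_key n first s c mod n = c" if "c \<in> agents n" for c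
    using that unfolding tier_key_def agents_def by simp
  with a b eq show "a = b" by metis
qed

lemma tier_key_le_spouse_iff:
  assumes "a < n" "s < n" "a \<noteq> s"
  shows "tier_key n first s a \<le> tier_key n first s s \<longleftrightarrow> first a"
  using assms unfolding tier_key_def by auto

definition women_prefs :: "nat \<Rightarrow> (nat \<times> nat \<Rightarrow> bool) \<Rightarrow> nat \<Rightarrow> (nat \<times> nat) set" where
  "women_prefs n x i = key_order (agents n) (tier_key n (\<lambda>j. x (i, j)) i)"

definition men_prefs :: "nat \<Rightarrow> (nat \<times> nat \<Rightarrow> bool) \<Rightarrow> nat \<Rightarrow> (nat \<times> nat) set" where
  "men_prefs n y j = key_order (agents n) (tier_key n (\<lambda>i. y (i, j)) j)"

lemma profile_women_prefs: "profile n (women_prefs n x)"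
  by (simp add: profile_def women_prefs_def linear_order_on_key_order inj_on_tier_key)

lemma profile_men_prefs: "profile n (men_prefs n y)"
  by (simp add: profile_def men_prefs_def linear_order_on_key_order inj_on_tier_key)

lemma blocking_pair_mu_id_iff:
  "blocking_pair n mu_id (women_prefs n x) (men_prefs n y) w m \<longleftrightarrow>
     (w, m) \<in> D n \<and> x (w, m) \<and> y (w, m)"
proof -
  have "inv_into (agents n) id m = m" if "m < n"
    using that by (simp add: agents_def inv_into_f_eq)
  then show ?thesis
    unfolding blocking_pair_def mu_id_def women_prefs_def men_prefs_def
      strictly_prefers_key_order D_def
    by (auto simp: agents_def tier_key_le_spouse_iff)
qed

theorem lemma14:
  fixes n :: nat
  shows "\<exists>(FW :: (nat \<times> nat \<Rightarrow> bool) \<Rightarrow> nat \<Rightarrow> (nat \<times> nat) set)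
           (FM :: (nat \<times> nat \<Rightarrow> bool) \<Rightarrow> nat \<Rightarrow> (nat \<times> nat) set).
           (\<forall>x\<in>bitvecs n. profile n (FW x)) \<and>
           (\<forall>y\<in>bitvecs n. profile n (FM y)) \<and>
           (\<forall>x\<in>bitvecs n. \<forall>y\<in>bitvecs n.
              stable n mu_id (FW x) (FM y) \<longleftrightarrow> DISJ n x y)"
proof (intro exI conjI ballI)
  fix x y
  show "stable n mu_id (women_prefs n x) (men_prefs n y) \<longleftrightarrow> DISJ n x y"
    unfolding stable_def DISJ_def blocking_pair_mu_id_iff by auto
qed (simp_all add: profile_women_prefs profile_men_prefs)

end
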